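(* Let $\alpha=(\sqrt5-1)/2$. Define $\varepsilon_1(n)=1$ if $n=F_{2k}-1$ for some $k\ge1$ and $\varepsilon_1(n)=0$ otherwise; define $\varepsilon_2(n)=1$ if $n=F_{2k+1}-1$ for some $k\ge1$ and $\varepsilon_2(n)=0$ otherwise. Then for all $n\ge0$, $$a(n)=\lfloor (n+1)\alpha\rfloor+\varepsilon_1(n),\qquad b(n)=\lfloor (n+1)\alpha\rfloor-\varepsilon_2(n).$$
   Context: $\mathbb{N}=\{0,1,2,\dots\}$. Fibonacci numbers: $F_0=0$, $F_1=1$, $F_k=F_{k-1}+F_{k-2}$. Hofstadter's "married" sequences $a,b:\mathbb{N}\to\mathbb{N}$ are defined by $a(0)=1$, $b(0)=0$ and, for $n\ge1$, $b(n)=n-a(b(n-1))$ and $a(n)=n-b(a(n-1))$ (computing $b(n)$ before $a(n)$ at each step). First values: $a=1,1,2,2,3,3,4,5,5,6,6,\dots$, $b=0,0,1,2,2,3,4,4,5,6,6,\dots$. *)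

theory Defs
  imports Complex_Main "HOL-Number_Theory.Fib"
begin

text \<open>Hofstadter's married sequences. hof_tables n = (list of a(0..n), list of b(0..n)).
  At step n, b(n) = n - a(b(n-1)) is computed first, then a(n) = n - b(a(n-1)),
  where the latter may use the freshly computed b(n).\<close>

fun hof_tables :: "nat \<Rightarrow> nat list \<times> nat list" where
  "hof_tables 0 = ([1], [0])"
| "hof_tables (Suc m) =
     (let (A, B) = hof_tables m;
          n = Suc m;
          bn = n - A ! (B ! m);
          B' = B @ [bn];
          an = n - B' ! (A ! m)
      in (A @ [an], B'))"

definition hof_a :: "nat \<Rightarrow> nat" where
  "hof_a n = fst (hof_tables n) ! n"

definition hof_b :: "nat \<Rightarrow> nat" where
  "hof_b n = snd (hof_tables n) ! n"

definition eps1 :: "nat \<Rightarrow> int" where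
  "eps1 n = (if \<exists>k\<ge>1. n = fib (2*k) - 1 then 1 else 0)"

definition eps2 :: "nat \<Rightarrow> int" where
  "eps2 n = (if \<exists>k\<ge>1. n = fib (2*k+1) - 1 then 1 else 0)"

lemma "map hof_a [0..<11] = [1,1,2,2,3,3,4,5,5,6,6]"
  by (simp add: hof_a_def numeral_eq_Suc)
lemma "map hof_b [0..<11] = [0,0,1,2,2,3,4,4,5,6,6]"
  by (simp add: hof_b_def numeral_eq_Suc)

end

theory Submission
  imports Defs "HOL-Computational_Algebra.Primes"
begin

text \<open>Let \<open>G n = \<lfloor>(n + 1) \<alpha>\<rfloor>\<close>. From \<open>\<alpha>\<^sup>2 = 1 - \<alpha>\<close> and the irrationality of \<open>\<alpha>\<close> one gets
  Hofstadter's recursion \<open>G (m + 1) = m + 1 - G (G m)\<close>. It then suffices to show that the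
  corrected sequences \<open>G + \<epsilon>\<^sub>1\<close> and \<open>G - \<epsilon>\<^sub>2\<close> satisfy the married recursion. The corrections
  are nonzero only just below Fibonacci numbers, so this reduces to evaluating \<open>G\<close> within
  distance 3 of a Fibonacci number, which the identity \<open>F (j + 1) \<alpha> = F j - (-\<alpha>) ^ (j + 1)\<close>
  makes exact.\<close>

definition inv_phi :: real where
  "inv_phi = (sqrt 5 - 1) / 2"

lemma inv_phi_squared: "inv_phi\<^sup>2 = 1 - inv_phi"
  unfolding inv_phi_def by (simp add: power2_eq_square algebra_simps add_divide_distrib diff_divide_distrib)

lemma inv_phi_bounds: "0.6 < inv_phi" "inv_phi < 0.625"
proof -
  have "2.2 < sqrt 5" by (rule real_less_rsqrt) (simp add: power2_eq_square)
  moreover have "sqrt 5 < 2.25" by (rule real_less_lsqrt) (simp_all add: power2_eq_square)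
  ultimately show "0.6 < inv_phi" "inv_phi < 0.625" unfolding inv_phi_def by auto
qed

lemma inv_phi_pos: "0 < inv_phi" and inv_phi_less_1: "inv_phi < 1"
  using inv_phi_bounds by auto

lemma inv_phi_power_strict_decreasing: "m < k \<Longrightarrow> inv_phi ^ k < inv_phi ^ m"
  using power_strict_decreasing inv_phi_pos inv_phi_less_1 by blast

lemma inv_phi_power_decreasing: "m \<le> k \<Longrightarrow> inv_phi ^ k \<le> inv_phi ^ m"
  using power_decreasing inv_phi_pos inv_phi_less_1 by (simp add: less_imp_le)

lemma inv_phi_cube: "inv_phi ^ 3 = 2 * inv_phi - 1"
proof -
  have sq: "inv_phi * inv_phi = 1 - inv_phi" using inv_phi_squared by (simp add: power2_eq_square)
  have "inv_phi ^ 3 = inv_phi * (inv_phi * inv_phi)" by (simp add: power3_eq_cube)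
  also have "\<dots> = inv_phi * (1 - inv_phi)" by (simp only: sq)
  also have "\<dots> = inv_phi - inv_phi * inv_phi" by (simp add: algebra_simps)
  finally show ?thesis using sq by linarith
qed

lemma square_eq_5_times_square_imp_0:
  fixes m n :: nat
  assumes "m\<^sup>2 = 5 * n\<^sup>2"
  shows "n = 0"
proof (rule ccontr)
  assume "n \<noteq> 0"
  with assms have "m \<noteq> 0" by (metis mult_is_0 power_not_zero zero_neq_numeral zero_power2)
  have "prime (5::nat)" by simp
  then have "multiplicity 5 (m\<^sup>2) = 2 * multiplicity 5 m"
    and "multiplicity 5 (5 * n\<^sup>2) = Suc (2 * multiplicity 5 n)"
    using \<open>m \<noteq> 0\<close> \<open>n \<noteq> 0\<close>
    by (simp_all add: prime_elem_multiplicity_power_distrib prime_elem_multiplicity_mult_distrib)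
  with assms have "2 * multiplicity 5 m = Suc (2 * multiplicity 5 n)" by simp
  then show False by presburger
qed

lemma of_nat_mult_inv_phi_not_int:
  assumes "0 < n"
  shows "real n * inv_phi \<noteq> of_int k"
proof
  assume "real n * inv_phi = of_int k"
  then have root: "real n * sqrt 5 = 2 * of_int k + real n"
    unfolding inv_phi_def by (simp add: algebra_simps)
  then have "0 \<le> 2 * of_int k + real n" unfolding root[symmetric] by simp
  then have "0 \<le> 2 * k + int n" by linarith
  then obtain m where m: "int m = 2 * k + int n" by (metis nonneg_int_cases)
  have "real m = 2 * of_int k + real n"
    by (metis m of_int_of_nat_eq of_int_add of_int_mult of_int_numeral)
  then have "real (m\<^sup>2) = (real n * sqrt 5)\<^sup>2"
    unfolding root of_nat_power by simp
  also have "\<dots> = real (5 * n\<^sup>2)" by (simp add: power_mult_distrib)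
  finally have "m\<^sup>2 = 5 * n\<^sup>2" by (simp only: of_nat_eq_iff)
  with assms show False using square_eq_5_times_square_imp_0 by blast
qed

lemma fib_mult_inv_phi: "real (fib (Suc j)) * inv_phi = real (fib j) - (- inv_phi) ^ Suc j"
proof (induction j rule: fib.induct)
  case (3 n)
  have "(- inv_phi) ^ Suc (Suc (Suc n)) = (- inv_phi) ^ Suc n * inv_phi\<^sup>2"
    by (simp add: power2_eq_square)
  with 3 show ?case using inv_phi_squared by (simp add: algebra_simps)
qed (use inv_phi_squared in \<open>simp_all add: power2_eq_square\<close>)

definition hof_G :: "nat \<Rightarrow> int" where
  "hof_G n = \<lfloor>real (n + 1) * inv_phi\<rfloor>"

lemma hof_G_nonneg: "0 \<le> hof_G n"
  unfolding hof_G_def using inv_phi_pos by simp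

lemma hof_G_le: "hof_G n \<le> int n"
proof -
  have "real (n + 1) * inv_phi < real (n + 1)" using inv_phi_less_1 by simp
  then show ?thesis unfolding hof_G_def by linarith
qed

lemma hof_G_mono: "m \<le> n \<Longrightarrow> hof_G m \<le> hof_G n"
  unfolding hof_G_def using inv_phi_pos by (intro floor_mono mult_right_mono) auto

lemma hof_G_eqI:
  "real (n + 1) * inv_phi = of_int z + d \<Longrightarrow> 0 \<le> d \<Longrightarrow> d < 1 \<Longrightarrow> hof_G n = z"
  unfolding hof_G_def by (simp add: floor_eq_iff)

lemma hof_G_lessI: "real (n + 1) * inv_phi = of_int z + d \<Longrightarrow> d < 0 \<Longrightarrow> hof_G n < z"
  unfolding hof_G_def by (simp add: floor_less_iff)

text \<open>Writing \<open>(m + 1) \<alpha> = k + f\<close> with \<open>k = G m\<close>, the identity \<open>\<alpha>\<^sup>2 = 1 - \<alpha>\<close> gives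
  \<open>(k + 1) \<alpha> = m + 1 - k - f + (1 - f) \<alpha>\<close>; the two floors then complement each other
  according to whether \<open>f < 1 - \<alpha>\<close>, a boundary that irrationality of \<open>\<alpha>\<close> excludes.\<close>

lemma hof_G_rec: "hof_G (Suc m) + hof_G (nat (hof_G m)) = int (Suc m)"
proof -
  define x where "x = real (m + 1) * inv_phi"
  define k where "k = hof_G m"
  define f where "f = x - of_int k"
  have "0 \<le> k" unfolding k_def by (rule hof_G_nonneg)
  have "k = \<lfloor>x\<rfloor>" unfolding k_def x_def hof_G_def by simp
  then have "0 \<le> f" "f < 1" unfolding f_def by linarith+
  have "f \<noteq> 1 - inv_phi"
  proof
    assume "f = 1 - inv_phi"
    then have "real (m + 2) * inv_phi = of_int (k + 1)"
      unfolding f_def x_def by (simp add: algebra_simps)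
    with of_nat_mult_inv_phi_not_int[of "m + 2" "k + 1"] show False by simp
  qed
  have G_Suc: "real (Suc m + 1) * inv_phi = of_int k + (f + inv_phi)"
    unfolding f_def x_def by (simp add: algebra_simps)
  have "x * inv_phi = real (m + 1) * inv_phi\<^sup>2"
    unfolding x_def by (simp add: power2_eq_square)
  then have "x * inv_phi = real (m + 1) - x"
    unfolding x_def inv_phi_squared by (simp add: algebra_simps)
  then have G_G: "real (nat k + 1) * inv_phi = of_int (int (Suc m) - k - 1) + (1 - f) * (1 + inv_phi)"
    using \<open>0 \<le> k\<close> unfolding f_def by (simp add: algebra_simps)
  have golden: "inv_phi * (1 + inv_phi) = 1"
    using inv_phi_squared by (simp add: power2_eq_square algebra_simps)
  have "(1 - f) * (1 + inv_phi) \<le> 1 + inv_phi"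
    using \<open>0 \<le> f\<close> inv_phi_pos by (simp add: mult_left_le_one_le)
  show ?thesis
  proof (cases "f < 1 - inv_phi")
    case True
    have "hof_G (Suc m) = k"
      using True \<open>0 \<le> f\<close> inv_phi_pos by (intro hof_G_eqI[OF G_Suc]) auto
    moreover have "inv_phi * (1 + inv_phi) < (1 - f) * (1 + inv_phi)"
      using True inv_phi_pos by (intro mult_strict_right_mono) auto
    then have "hof_G (nat k) = int (Suc m) - k"
      using G_G golden \<open>(1 - f) * (1 + inv_phi) \<le> 1 + inv_phi\<close> inv_phi_less_1
      by (intro hof_G_eqI[where d = "(1 - f) * (1 + inv_phi) - 1"]) auto
    ultimately show ?thesis unfolding k_def by simp
  next
    case False
    with \<open>f \<noteq> 1 - inv_phi\<close> have "1 - inv_phi < f" by simp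
    have "hof_G (Suc m) = k + 1"
      using G_Suc False \<open>f < 1\<close> inv_phi_less_1 by (intro hof_G_eqI[where d = "f + inv_phi - 1"]) auto
    moreover have "(1 - f) * (1 + inv_phi) < inv_phi * (1 + inv_phi)"
      using \<open>1 - inv_phi < f\<close> inv_phi_pos by (intro mult_strict_right_mono) auto
    then have "hof_G (nat k) = int (Suc m) - k - 1"
      using G_G golden \<open>f < 1\<close> inv_phi_pos
      by (intro hof_G_eqI[where d = "(1 - f) * (1 + inv_phi)"]) auto
    ultimately show ?thesis unfolding k_def by simp
  qed
qed

lemma near_fib_mult_inv_phi:
  assumes "n + c = fib (Suc j)"
  shows "real (n + 1) * inv_phi = real (fib j) + ((1 - real c) * inv_phi - (- inv_phi) ^ Suc j)"
proof -
  have "real (n + 1) = real (fib (Suc j)) + (1 - real c)"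
    using arg_cong[OF assms, of real] by simp
  then have "real (n + 1) * inv_phi = real (fib (Suc j)) * inv_phi + (1 - real c) * inv_phi"
    by (simp only: distrib_right)
  then show ?thesis unfolding fib_mult_inv_phi by simp
qed

lemma near_odd_fib_mult_inv_phi:
  "n + c = fib (2 * t + 1) \<Longrightarrow>
    real (n + 1) * inv_phi = real (fib (2 * t)) + ((1 - real c) * inv_phi + inv_phi ^ (2 * t + 1))"
  using near_fib_mult_inv_phi[of n c "2 * t"] by simp

lemma near_even_fib_mult_inv_phi:
  "n + c = fib (2 * t + 2) \<Longrightarrow>
    real (n + 1) * inv_phi = real (fib (2 * t + 1)) + ((1 - real c) * inv_phi - inv_phi ^ (2 * t + 2))"
  using near_fib_mult_inv_phi[of n c "2 * t + 1"] by (simp add: power_mult power2_eq_square)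

lemma hof_G_pred_odd_fib:
  assumes "n + 1 = fib (2 * t + 1)"
  shows "hof_G n = int (fib (2 * t))"
proof (rule hof_G_eqI)
  show "real (n + 1) * inv_phi = of_int (int (fib (2 * t))) + inv_phi ^ (2 * t + 1)"
    using near_odd_fib_mult_inv_phi[OF assms] by simp
  show "0 \<le> inv_phi ^ (2 * t + 1)" using inv_phi_pos by simp
  show "inv_phi ^ (2 * t + 1) < 1"
    using inv_phi_power_decreasing[of 1 "2 * t + 1"] inv_phi_less_1 by simp
qed

lemma hof_G_odd_fib_minus_2:
  assumes "1 \<le> t" "n + 2 = fib (2 * t + 1)"
  shows "hof_G n = int (fib (2 * t)) - 1"
proof (rule hof_G_eqI)
  show "real (n + 1) * inv_phi
      = of_int (int (fib (2 * t)) - 1) + (1 - inv_phi + inv_phi ^ (2 * t + 1))"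
    using near_odd_fib_mult_inv_phi[OF assms(2)] by simp
  have "inv_phi ^ (2 * t + 1) < inv_phi ^ 1"
    by (rule inv_phi_power_strict_decreasing) (use assms(1) in simp)
  then show "1 - inv_phi + inv_phi ^ (2 * t + 1) < 1" by simp
  show "0 \<le> 1 - inv_phi + inv_phi ^ (2 * t + 1)"
    using inv_phi_less_1 zero_less_power[OF inv_phi_pos, of "2 * t + 1"] by linarith
qed

lemma hof_G_below_odd_fib:
  assumes "n + 3 \<le> fib (2 * t + 1)"
  shows "hof_G n < int (fib (2 * t)) - 1"
proof -
  define x where "x = fib (2 * t + 1) - 3"
  have x: "x + 3 = fib (2 * t + 1)" "n \<le> x"
    using assms unfolding x_def by simp_all
  have "2 \<le> t"
  proof (rule ccontr)
    assume "\<not> 2 \<le> t"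
    then have "t = 0 \<or> t = 1" by auto
    with x(1) show False by (auto simp: numeral_eq_Suc)
  qed
  have "hof_G x < int (fib (2 * t)) - 1"
  proof (rule hof_G_lessI)
    show "real (x + 1) * inv_phi
        = of_int (int (fib (2 * t)) - 1) + (1 - 2 * inv_phi + inv_phi ^ (2 * t + 1))"
      using near_odd_fib_mult_inv_phi[OF x(1)] by simp
    have "inv_phi ^ (2 * t + 1) < inv_phi ^ 3"
      by (rule inv_phi_power_strict_decreasing) (use \<open>2 \<le> t\<close> in simp)
    then show "1 - 2 * inv_phi + inv_phi ^ (2 * t + 1) < 0"
      unfolding inv_phi_cube by simp
  qed
  with hof_G_mono[OF x(2)] show ?thesis by simp
qed

lemma hof_G_odd_fib:
  assumes "1 \<le> t"
  shows "hof_G (fib (2 * t + 1)) = int (fib (2 * t))"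
proof (rule hof_G_eqI)
  show "real (fib (2 * t + 1) + 1) * inv_phi
      = of_int (int (fib (2 * t))) + (inv_phi + inv_phi ^ (2 * t + 1))"
    using near_odd_fib_mult_inv_phi[of _ 0] by simp
  have "inv_phi ^ (2 * t + 1) < inv_phi\<^sup>2"
    by (rule inv_phi_power_strict_decreasing) (use assms in simp)
  then show "inv_phi + inv_phi ^ (2 * t + 1) < 1"
    using inv_phi_squared by simp
  show "0 \<le> inv_phi + inv_phi ^ (2 * t + 1)" using inv_phi_pos by simp
qed

lemma hof_G_above_odd_fib:
  assumes "fib (2 * t + 1) \<le> n + 1"
  shows "int (fib (2 * t)) \<le> hof_G n"
proof -
  have "0 < fib (2 * t + 1)" by (simp add: fib_neq_0_nat)
  then have "fib (2 * t + 1) - 1 + 1 = fib (2 * t + 1)" "fib (2 * t + 1) - 1 \<le> n"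
    using assms by simp_all
  then show ?thesis using hof_G_pred_odd_fib hof_G_mono by fastforce
qed

lemma hof_G_pred_even_fib:
  assumes "n + 1 = fib (2 * t + 2)"
  shows "hof_G n = int (fib (2 * t + 1)) - 1"
proof (rule hof_G_eqI)
  show "real (n + 1) * inv_phi
      = of_int (int (fib (2 * t + 1)) - 1) + (1 - inv_phi ^ (2 * t + 2))"
    using near_even_fib_mult_inv_phi[OF assms] by simp
  show "0 \<le> 1 - inv_phi ^ (2 * t + 2)"
    using inv_phi_power_decreasing[of 1 "2 * t + 2"] inv_phi_less_1 by simp
  show "1 - inv_phi ^ (2 * t + 2) < 1" using inv_phi_pos by simp
qed

lemma hof_G_even_fib_minus_2:
  assumes "n + 2 = fib (2 * t + 2)"
  shows "hof_G n = int (fib (2 * t + 1)) - 1"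
proof (rule hof_G_eqI)
  show "real (n + 1) * inv_phi
      = of_int (int (fib (2 * t + 1)) - 1) + (1 - inv_phi - inv_phi ^ (2 * t + 2))"
    using near_even_fib_mult_inv_phi[OF assms] by simp
  have "inv_phi ^ (2 * t + 2) \<le> inv_phi\<^sup>2"
    by (rule inv_phi_power_decreasing) simp
  then show "0 \<le> 1 - inv_phi - inv_phi ^ (2 * t + 2)"
    using inv_phi_squared by simp
  show "1 - inv_phi - inv_phi ^ (2 * t + 2) < 1"
    using inv_phi_pos zero_less_power[OF inv_phi_pos, of "2 * t + 2"] by linarith
qed

lemma hof_G_below_even_fib:
  assumes "n + 3 \<le> fib (2 * t + 2)"
  shows "hof_G n < int (fib (2 * t + 1)) - 1"
proof -
  define x where "x = fib (2 * t + 2) - 3"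
  have x: "x + 3 = fib (2 * t + 2)" "n \<le> x"
    using assms unfolding x_def by simp_all
  have "hof_G x < int (fib (2 * t + 1)) - 1"
  proof (rule hof_G_lessI)
    show "real (x + 1) * inv_phi
        = of_int (int (fib (2 * t + 1)) - 1) + (1 - 2 * inv_phi - inv_phi ^ (2 * t + 2))"
      using near_even_fib_mult_inv_phi[OF x(1)] by simp
    show "1 - 2 * inv_phi - inv_phi ^ (2 * t + 2) < 0"
      using inv_phi_bounds zero_less_power[OF inv_phi_pos, of "2 * t + 2"] by linarith
  qed
  with hof_G_mono[OF x(2)] show ?thesis by simp
qed

lemma hof_G_even_fib: "hof_G (fib (2 * t + 2)) = int (fib (2 * t + 1))"
proof (rule hof_G_eqI)
  show "real (fib (2 * t + 2) + 1) * inv_phi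
      = of_int (int (fib (2 * t + 1))) + (inv_phi - inv_phi ^ (2 * t + 2))"
    using near_even_fib_mult_inv_phi[of _ 0] by simp
  show "0 \<le> inv_phi - inv_phi ^ (2 * t + 2)"
    using inv_phi_power_decreasing[of 1 "2 * t + 2"] by simp
  show "inv_phi - inv_phi ^ (2 * t + 2) < 1"
    using inv_phi_less_1 zero_less_power[OF inv_phi_pos, of "2 * t + 2"] by linarith
qed

lemma hof_G_above_even_fib: "fib (2 * t + 2) \<le> n \<Longrightarrow> int (fib (2 * t + 1)) \<le> hof_G n"
  using hof_G_even_fib[of t] hof_G_mono[of "fib (2 * t + 2)" n] by simp

lemma hof_G_eq_pred_even_fib_iff:
  assumes "1 \<le> t"
  shows "hof_G m = int (fib (2 * t)) - 1 \<longleftrightarrow> m + 2 = fib (2 * t + 1)"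
proof
  assume "hof_G m = int (fib (2 * t)) - 1"
  then have "\<not> m + 3 \<le> fib (2 * t + 1)" "\<not> fib (2 * t + 1) \<le> m + 1"
    using hof_G_below_odd_fib hof_G_above_odd_fib by force+
  then show "m + 2 = fib (2 * t + 1)" by simp
qed (use hof_G_odd_fib_minus_2 assms in blast)

lemma hof_G_eq_pred_odd_fib_iff:
  "hof_G m = int (fib (2 * t + 1)) - 1 \<longleftrightarrow> m + 2 = fib (2 * t + 2) \<or> m + 1 = fib (2 * t + 2)"
proof
  assume "hof_G m = int (fib (2 * t + 1)) - 1"
  then have "\<not> m + 3 \<le> fib (2 * t + 2)" "\<not> fib (2 * t + 2) \<le> m"
    using hof_G_below_even_fib hof_G_above_even_fib by force+
  then show "m + 2 = fib (2 * t + 2) \<or> m + 1 = fib (2 * t + 2)" by linarith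
qed (use hof_G_even_fib_minus_2 hof_G_pred_even_fib in blast)

lemma fib_eq_fib_plus_1_imp_Suc:
  assumes "2 \<le> p" "fib q = fib p + 1"
  shows "q = Suc p"
proof (rule ccontr)
  assume "q \<noteq> Suc p"
  moreover have "p < q"
    using assms(2) fib_mono[of q p] by (cases "q \<le> p") auto
  ultimately have "p + 2 \<le> q" by simp
  then have "fib (p + 2) \<le> fib q" by (rule fib_mono)
  moreover have "fib 3 \<le> fib (p + 1)" using assms(1) by (intro fib_mono) simp
  ultimately show False
    using assms(2) unfolding fib_plus_2 by (simp add: numeral_eq_Suc)
qed

lemma eps1_cases: "eps1 n = 0 \<or> eps1 n = 1"
  and eps2_cases: "eps2 n = 0 \<or> eps2 n = 1"
  unfolding eps1_def eps2_def by simp_all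

lemma eps2_odd_fib:
  assumes "1 \<le> k"
  shows "eps2 (fib (2 * k + 1)) = 0"
proof -
  have "fib (2 * k + 1) \<noteq> fib (2 * j + 1) - 1" for j
  proof
    assume "fib (2 * k + 1) = fib (2 * j + 1) - 1"
    then have "fib (2 * j + 1) = fib (2 * k + 1) + 1"
      using fib_neq_0_nat[of "2 * k + 1"] by simp
    then have "2 * j + 1 = Suc (2 * k + 1)"
      using assms by (intro fib_eq_fib_plus_1_imp_Suc) simp_all
    then show False by presburger
  qed
  then show ?thesis unfolding eps2_def by simp
qed

lemma eps1_even_fib: "eps1 (fib (2 * t + 2)) = 0"
proof -
  have "fib (2 * t + 2) \<noteq> fib (2 * k) - 1" if "1 \<le> k" for k
  proof
    assume "fib (2 * t + 2) = fib (2 * k) - 1"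
    then have "fib (2 * k) = fib (2 * t + 2) + 1"
      using fib_neq_0_nat[of "2 * k"] that by simp
    then have "2 * k = Suc (2 * t + 2)"
      by (intro fib_eq_fib_plus_1_imp_Suc) simp_all
    then show False by presburger
  qed
  then show ?thesis unfolding eps1_def by simp
qed

definition closed_a :: "nat \<Rightarrow> int" where
  "closed_a n = hof_G n + eps1 n"

definition closed_b :: "nat \<Rightarrow> int" where
  "closed_b n = hof_G n - eps2 n"

lemma closed_a_le: "closed_a n \<le> int n + 1"
  using hof_G_le[of n] eps1_cases[of n] unfolding closed_a_def by auto

lemma closed_b_le: "closed_b n \<le> int n"
  using hof_G_le[of n] eps2_cases[of n] unfolding closed_b_def by auto

lemma closed_a_0: "closed_a 0 = 1"
proof -
  have "hof_G 0 = 0" using hof_G_pred_odd_fib[of 0 0] by simp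
  moreover have "eps1 0 = 1"
    unfolding eps1_def by (auto intro!: exI[of _ 1] simp: numeral_eq_Suc)
  ultimately show ?thesis unfolding closed_a_def by simp
qed

lemma closed_b_0: "closed_b 0 = 0"
proof -
  have "hof_G 0 = 0" using hof_G_pred_odd_fib[of 0 0] by simp
  moreover have "0 \<noteq> fib (2 * k + 1) - 1" if "1 \<le> k" for k
    using fib_mono[of 3 "2 * k + 1"] that by (simp add: numeral_eq_Suc)
  then have "eps2 0 = 0"
    unfolding eps2_def by auto
  ultimately show ?thesis unfolding closed_b_def by simp
qed

lemma closed_b_odd_fib: "closed_b (fib (2 * t + 1)) = int (fib (2 * t))"
proof (cases "t = 0")
  case True
  have "hof_G 1 = 1" using hof_G_pred_odd_fib[of 1 1] by (simp add: numeral_eq_Suc)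
  moreover have "eps2 1 = 1"
    unfolding eps2_def by (auto intro!: exI[of _ 1] simp: numeral_eq_Suc)
  ultimately show ?thesis using True unfolding closed_b_def by simp
next
  case False
  then show ?thesis
    using hof_G_odd_fib eps2_odd_fib unfolding closed_b_def by simp
qed

(* Otherwise simp rewrites fib (2 * t + 2) to fib (2 * t + 1) + fib (2 * t) and loses the
   Fibonacci indices that the lemmas above are stated in. *)
declare fib.simps(3) [simp del]

lemma eps1_hof_G: "eps1 (nat (hof_G m)) = eps2 (Suc m)"
proof -
  have "nat (hof_G m) = fib (2 * k) - 1 \<longleftrightarrow> Suc m = fib (2 * k + 1) - 1" if "1 \<le> k" for k
  proof -
    have "0 < fib (2 * k)" "0 < fib (2 * k + 1)"
      using that by (simp_all add: fib_neq_0_nat)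
    then have "nat (hof_G m) = fib (2 * k) - 1 \<longleftrightarrow> hof_G m = int (fib (2 * k)) - 1"
      using hof_G_nonneg[of m] by auto
    also have "\<dots> \<longleftrightarrow> m + 2 = fib (2 * k + 1)"
      by (rule hof_G_eq_pred_even_fib_iff[OF that])
    finally show ?thesis using \<open>0 < fib (2 * k + 1)\<close> by auto
  qed
  then have "(\<exists>k\<ge>1. nat (hof_G m) = fib (2 * k) - 1) \<longleftrightarrow> (\<exists>k\<ge>1. Suc m = fib (2 * k + 1) - 1)"
    by blast
  then show ?thesis
    unfolding eps1_def eps2_def by simp
qed

lemma eps2_hof_G:
  assumes "eps1 m = 0"
  shows "eps2 (nat (hof_G m)) = eps1 (Suc m)"
proof -
  have no_pred_even_fib: "\<not> (\<exists>k\<ge>1. m = fib (2 * k) - 1)"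
    using assms unfolding eps1_def by (simp split: if_splits)
  have shift: "nat (hof_G m) = fib (2 * j + 1) - 1 \<longleftrightarrow> Suc m = fib (2 * j + 2) - 1" for j
  proof -
    have "0 < fib (2 * j + 1)" "0 < fib (2 * j + 2)"
      by (simp_all add: fib_neq_0_nat)
    then have "nat (hof_G m) = fib (2 * j + 1) - 1 \<longleftrightarrow> hof_G m = int (fib (2 * j + 1)) - 1"
      using hof_G_nonneg[of m] by auto
    also have "\<dots> \<longleftrightarrow> m + 2 = fib (2 * j + 2) \<or> m + 1 = fib (2 * j + 2)"
      by (rule hof_G_eq_pred_odd_fib_iff)
    also have "\<dots> \<longleftrightarrow> m + 2 = fib (2 * j + 2)"
    proof -
      have "m \<noteq> fib (2 * (j + 1)) - 1" using no_pred_even_fib le_add2 by blast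
      then show ?thesis by (auto simp: algebra_simps)
    qed
    finally show ?thesis using \<open>0 < fib (2 * j + 2)\<close> by auto
  qed
  have reindex: "(\<exists>k\<ge>1. Suc m = fib (2 * k) - 1) \<longleftrightarrow> (\<exists>j\<ge>1. Suc m = fib (2 * j + 2) - 1)"
  proof
    assume "\<exists>k\<ge>1. Suc m = fib (2 * k) - 1"
    then obtain k where k: "1 \<le> k" "Suc m = fib (2 * k) - 1" by blast
    then have "k \<noteq> 1" by auto
    with k(1) obtain j where "k = j + 1" "1 \<le> j" by (cases k) auto
    then have "2 * k = 2 * j + 2" by simp
    with k(2) \<open>1 \<le> j\<close> show "\<exists>j\<ge>1. Suc m = fib (2 * j + 2) - 1" by auto
  next
    assume "\<exists>j\<ge>1. Suc m = fib (2 * j + 2) - 1"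
    then obtain j where "Suc m = fib (2 * j + 2) - 1" by blast
    moreover have "2 * j + 2 = 2 * (j + 1)" by simp
    ultimately have "Suc m = fib (2 * (j + 1)) - 1" by (simp only:)
    then show "\<exists>k\<ge>1. Suc m = fib (2 * k) - 1" using le_add2 by blast
  qed
  have "(\<exists>j\<ge>1. nat (hof_G m) = fib (2 * j + 1) - 1) \<longleftrightarrow> (\<exists>k\<ge>1. Suc m = fib (2 * k) - 1)"
    by (simp only: reindex shift)
  then show ?thesis
    unfolding eps1_def eps2_def by (simp only:)
qed

lemma closed_a_closed_b: "closed_a (nat (closed_b m)) = hof_G (nat (hof_G m)) + eps2 (Suc m)"
proof (cases "eps2 m = 0")
  case True
  then have "nat (closed_b m) = nat (hof_G m)"
    unfolding closed_b_def by simp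
  then show ?thesis
    unfolding closed_a_def by (simp only: eps1_hof_G)
next
  case False
  with eps2_cases[of m] have "\<exists>k\<ge>1. m = fib (2 * k + 1) - 1"
    unfolding eps2_def by (auto split: if_splits)
  then obtain k where k: "1 \<le> k" "m = fib (2 * k + 1) - 1" by blast
  then have m: "m + 1 = fib (2 * k + 1)" using fib_neq_0_nat[of "2 * k + 1"] by simp
  from k(1) obtain t where "k = t + 1" by (cases k) auto
  then have t: "2 * k = 2 * t + 2" by simp
  have "hof_G m = int (fib (2 * t + 2))"
    using hof_G_pred_odd_fib[OF m] t by simp
  moreover have "eps2 m = 1"
    using False eps2_cases[of m] by simp
  ultimately have "nat (closed_b m) + 1 = fib (2 * t + 2)"
    unfolding closed_b_def using fib_neq_0_nat[of "2 * t + 2"] by simp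
  moreover have "eps1 (nat (closed_b m)) = 1"
  proof -
    have "nat (closed_b m) = fib (2 * (t + 1)) - 1"
      using calculation by simp
    then have "\<exists>k\<ge>1. nat (closed_b m) = fib (2 * k) - 1" using le_add2 by blast
    then show ?thesis unfolding eps1_def by simp
  qed
  ultimately have "closed_a (nat (closed_b m)) = int (fib (2 * t + 1))"
    using hof_G_pred_even_fib unfolding closed_a_def by simp
  moreover have "hof_G (nat (hof_G m)) = int (fib (2 * t + 1))"
    using \<open>hof_G m = int (fib (2 * t + 2))\<close> hof_G_even_fib by simp
  moreover have "eps2 (Suc m) = 0"
    using eps2_odd_fib[OF k(1)] m by simp
  ultimately show ?thesis by simp
qed

lemma closed_b_closed_a: "closed_b (nat (closed_a m)) = hof_G (nat (hof_G m)) - eps1 (Suc m)"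
proof (cases "eps1 m = 0")
  case True
  then have "nat (closed_a m) = nat (hof_G m)"
    unfolding closed_a_def by simp
  then show ?thesis
    unfolding closed_b_def by (simp only: eps2_hof_G[OF True])
next
  case False
  with eps1_cases[of m] have "\<exists>k\<ge>1. m = fib (2 * k) - 1"
    unfolding eps1_def by (auto split: if_splits)
  then obtain k where k: "1 \<le> k" "m = fib (2 * k) - 1" by blast
  then obtain t where "k = t + 1" by (cases k) auto
  with k fib_neq_0_nat[of "2 * k"] have m: "m + 1 = fib (2 * t + 2)" by simp
  have "hof_G m = int (fib (2 * t + 1)) - 1"
    by (rule hof_G_pred_even_fib[OF m])
  moreover have "eps1 m = 1"
    using False eps1_cases[of m] by simp
  ultimately have "nat (closed_a m) = fib (2 * t + 1)"
    unfolding closed_a_def by simp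
  then have "closed_b (nat (closed_a m)) = int (fib (2 * t))"
    using closed_b_odd_fib by simp
  moreover have "nat (hof_G m) + 1 = fib (2 * t + 1)"
    using \<open>hof_G m = int (fib (2 * t + 1)) - 1\<close> fib_neq_0_nat[of "2 * t + 1"] by simp
  then have "hof_G (nat (hof_G m)) = int (fib (2 * t))"
    by (rule hof_G_pred_odd_fib)
  moreover have "eps1 (Suc m) = 0"
    using eps1_even_fib m by simp
  ultimately show ?thesis by simp
qed

lemma closed_b_Suc: "closed_b (Suc m) = int (Suc m) - closed_a (nat (closed_b m))"
proof -
  have "closed_b (Suc m) = hof_G (Suc m) - eps2 (Suc m)"
    by (simp only: closed_b_def)
  also have "\<dots> = int (Suc m) - (hof_G (nat (hof_G m)) + eps2 (Suc m))"
    using hof_G_rec[of m] by linarith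
  finally show ?thesis by (simp only: closed_a_closed_b)
qed

lemma closed_a_Suc: "closed_a (Suc m) = int (Suc m) - closed_b (nat (closed_a m))"
proof -
  have "closed_a (Suc m) = hof_G (Suc m) + eps1 (Suc m)"
    by (simp only: closed_a_def)
  also have "\<dots> = int (Suc m) - (hof_G (nat (hof_G m)) - eps1 (Suc m))"
    using hof_G_rec[of m] by linarith
  finally show ?thesis by (simp only: closed_b_closed_a)
qed

lemma hof_tables_eq: "hof_tables n = (map hof_a [0..<Suc n], map hof_b [0..<Suc n])"
proof (induction n)
  case 0
  show ?case by (simp add: hof_a_def hof_b_def)
next
  case (Suc m)
  obtain x y where xy: "hof_tables (Suc m) = (map hof_a [0..<Suc m] @ [x], map hof_b [0..<Suc m] @ [y])"
    by (simp add: Suc.IH Let_def)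
  then have "hof_a (Suc m) = x" "hof_b (Suc m) = y"
    unfolding hof_a_def hof_b_def by (simp_all add: nth_append)
  with xy show ?case by simp
qed

lemma hof_b_Suc:
  assumes "hof_b m \<le> m"
  shows "hof_b (Suc m) = Suc m - hof_a (hof_b m)"
  using assms unfolding hof_b_def[of "Suc m"]
  by (simp add: hof_tables_eq[of m] Let_def nth_append del: upt_Suc)

text \<open>When \<open>a(m) = m + 1\<close>, the recursion for \<open>a(m + 1)\<close> reads the value \<open>b(m + 1)\<close> computed
  in the same step.\<close>

lemma hof_a_Suc:
  assumes "hof_a m \<le> Suc m" "hof_b m \<le> m"
  shows "hof_a (Suc m) = Suc m - hof_b (hof_a m)"
proof -
  have b: "(map hof_b [0..<Suc m] @ [Suc m - hof_a (hof_b m)]) ! hof_a m = hof_b (hof_a m)"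
  proof (cases "hof_a m = Suc m")
    case True
    then show ?thesis using hof_b_Suc[OF assms(2)] by (simp add: nth_append del: upt_Suc)
  next
    case False
    with assms(1) show ?thesis by (simp add: nth_append del: upt_Suc)
  qed
  have a: "(map hof_a [0..<Suc m] @ [v]) ! Suc m = v" for v
    by (simp add: nth_append del: upt_Suc)
  show ?thesis
    using assms unfolding hof_a_def[of "Suc m"]
    by (simp add: a b hof_tables_eq[of m] Let_def del: upt_Suc)
qed

lemma hof_a_hof_b_closed: "int (hof_a n) = closed_a n \<and> int (hof_b n) = closed_b n"
proof (induction n rule: less_induct)
  case (less n)
  show ?case
  proof (cases n)
    case 0
    then show ?thesis using closed_a_0 closed_b_0 by (simp add: hof_a_def hof_b_def)
  next
    case (Suc m)
    then have a_m: "int (hof_a m) = closed_a m" and b_m: "int (hof_b m) = closed_b m"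
      using less.IH by auto
    then have "hof_b m \<le> m" "hof_a m \<le> Suc m"
      using closed_a_le[of m] closed_b_le[of m] by linarith+
    have a_b_m: "int (hof_a (hof_b m)) = closed_a (hof_b m)"
      using less.IH \<open>hof_b m \<le> m\<close> Suc by simp
    then have "hof_a (hof_b m) \<le> Suc m"
      using closed_a_le[of "hof_b m"] \<open>hof_b m \<le> m\<close> by linarith
    then have b_Suc: "int (hof_b (Suc m)) = closed_b (Suc m)"
      unfolding hof_b_Suc[OF \<open>hof_b m \<le> m\<close>] closed_b_Suc
      using a_b_m by (simp flip: b_m)
    have b_a_m: "int (hof_b (hof_a m)) = closed_b (hof_a m)"
    proof (cases "hof_a m = Suc m")
      case True
      with b_Suc show ?thesis by simp
    next
      case False
      with \<open>hof_a m \<le> Suc m\<close> Suc less.IH show ?thesis by simp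
    qed
    then have "hof_b (hof_a m) \<le> Suc m"
      using closed_b_le[of "hof_a m"] \<open>hof_a m \<le> Suc m\<close> by linarith
    then have "int (hof_a (Suc m)) = closed_a (Suc m)"
      unfolding hof_a_Suc[OF \<open>hof_a m \<le> Suc m\<close> \<open>hof_b m \<le> m\<close>] closed_a_Suc
      using b_a_m by (simp flip: a_m)
    with b_Suc Suc show ?thesis by simp
  qed
qed

theorem theorem8:
  fixes n :: nat
  defines "\<alpha> \<equiv> (sqrt 5 - 1) / 2"
  shows "int (hof_a n) = \<lfloor>real (n + 1) * \<alpha>\<rfloor> + eps1 n
       \<and> int (hof_b n) = \<lfloor>real (n + 1) * \<alpha>\<rfloor> - eps2 n"
  using hof_a_hof_b_closed[of n]
  unfolding closed_a_def closed_b_def hof_G_def inv_phi_def \<alpha>_def .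

end
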